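(* Let $\eta\in(0,\frac12]$. For each cluster $V_i$, $i\in[k]$, let $B_i\subseteq V$ be an $(\eta,V_i)$-biased set of size at least $\frac{16\log n}{\eta^2\delta^2}$ (fixed independently of the oracle's answers on pairs involving it). Then with probability at least $1-n^{-6}$, the following holds for all $v\in V$ and all $i\in[k]$ simultaneously: (1) if $v\in V_i$, then $\mathsf{ClusterVerify}(v,B_i)$ returns TRUE; (2) if $v\notin V_i$, then $\mathsf{ClusterVerify}(v,B_i)$ returns FALSE.
   Context: Clustering with a faulty oracle: a set $V$ of $n$ vertices is partitioned into $k$ unknown clusters $V_1,\dots,V_k$; $\tau(u,v)=1$ if $u,v$ are in the same cluster, $-1$ otherwise. A query of pair $(u,v)$ returns $\tilde\tau(u,v)=\sigma_{u,v}\tau(u,v)$ with independent $\sigma_{u,v}\in\{\pm1\}$, $\Pr[\sigma_{u,v}=+1]=\frac12+\frac\delta2$, $\delta\in(0,1)$; repeated queries return the same answer. For $\eta\in[0,\frac12]$ and a cluster $C=V_i$, a set $B\subseteq V$ is $(\eta,C)$-biased if $|B\cap C|\ge(\frac12+\eta)|B|$. $\mathsf{ClusterVerify}(v,B)$: query $(v,u)$ for every $u\in B$, let $d(v,B)=\#\{u\in B:\tilde\tau(v,u)=1\}$, and output TRUE if $d(v,B)\ge\frac12|B|$, FALSE otherwise. *)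

theory Defs
  imports "HOL-Probability.Probability"
begin

definition is_partition :: "'a set \<Rightarrow> nat \<Rightarrow> (nat \<Rightarrow> 'a set) \<Rightarrow> bool" where
  "is_partition V k Cl \<longleftrightarrow>
     (\<forall>i\<in>{1..k}. Cl i \<noteq> {} \<and> Cl i \<subseteq> V) \<and>
     (\<forall>i\<in>{1..k}. \<forall>j\<in>{1..k}. i \<noteq> j \<longrightarrow> Cl i \<inter> Cl j = {}) \<and>
     (\<Union>i\<in>{1..k}. Cl i) = V"

definition tau :: "nat \<Rightarrow> (nat \<Rightarrow> 'a set) \<Rightarrow> 'a \<Rightarrow> 'a \<Rightarrow> int" where
  "tau k Cl u v = (if \<exists>i\<in>{1..k}. u \<in> Cl i \<and> v \<in> Cl i then 1 else -1)"

definition pairs :: "'a set \<Rightarrow> 'a set set" where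
  "pairs V = {{u, v} | u v. u \<in> V \<and> v \<in> V}"

(* Distribution of the noise sigma: independent signs on all unordered pairs,
  each equal to +1 with probability 1/2 + delta/2.  One value per pair means that
  repeated queries return the same answer. *)
definition noise_pmf :: "'a set \<Rightarrow> real \<Rightarrow> ('a set \<Rightarrow> int) pmf" where
  "noise_pmf V \<delta> = Pi_pmf (pairs V) 1
     (\<lambda>_. map_pmf (\<lambda>b. if b then 1 else -1) (bernoulli_pmf (1/2 + \<delta>/2)))"

definition noisy_answer :: "nat \<Rightarrow> (nat \<Rightarrow> 'a set) \<Rightarrow> ('a set \<Rightarrow> int) \<Rightarrow> 'a \<Rightarrow> 'a \<Rightarrow> int" where
  "noisy_answer k Cl \<sigma> u v = \<sigma> {u, v} * tau k Cl u v"

definition dvB :: "nat \<Rightarrow> (nat \<Rightarrow> 'a set) \<Rightarrow> ('a set \<Rightarrow> int) \<Rightarrow> 'a \<Rightarrow> 'a set \<Rightarrow> nat" where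
  "dvB k Cl \<sigma> v B = card {u \<in> B. noisy_answer k Cl \<sigma> v u = 1}"

definition cluster_verify :: "nat \<Rightarrow> (nat \<Rightarrow> 'a set) \<Rightarrow> ('a set \<Rightarrow> int) \<Rightarrow> 'a \<Rightarrow> 'a set \<Rightarrow> bool" where
  "cluster_verify k Cl \<sigma> v B \<longleftrightarrow> real (dvB k Cl \<sigma> v B) \<ge> real (card B) / 2"

definition biased :: "real \<Rightarrow> 'a set \<Rightarrow> 'a set \<Rightarrow> bool" where
  "biased \<eta> C B \<longleftrightarrow> real (card (B \<inter> C)) \<ge> (1/2 + \<eta>) * real (card B)"

end

theory Submission
  imports Defs
begin

(*
  Fix a vertex v and a cluster C = V_i. The answers on the pairs {v, u}, u in B_i, are independent,
  so d(v, B_i) is a sum of |B_i| independent indicators with mean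
  |B_i|/2 + (delta/2) sum_{u in B_i} tau(v, u). Since B_i is (eta, C)-biased, that sum is at least
  2 eta |B_i| if v in C and at most -2 eta |B_i| otherwise, so the mean lies delta eta |B_i| away
  from the threshold |B_i|/2 on the correct side. Hoeffding's inequality bounds the error
  probability by exp (-2 delta^2 eta^2 |B_i|) <= n^-32, and a union bound over the at most n^2
  pairs (v, i) gives n^-30 <= n^-6.
*)

lemma finite_pairs:
  assumes "finite V"
  shows "finite (pairs V)"
proof -
  have "pairs V = (\<lambda>(u, v). {u, v}) ` (V \<times> V)"
    unfolding pairs_def by auto
  then show ?thesis
    using assms by simp
qed

lemma expectation_noise_eq_sign:
  assumes "finite V" "p \<in> pairs V" "s = 1 \<or> s = -1" "\<bar>\<delta>\<bar> \<le> 1"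
  shows "measure_pmf.expectation (noise_pmf V \<delta>) (\<lambda>\<sigma>. of_bool (\<sigma> p = s) :: real) = 1/2 + \<delta>/2 * s"
proof -
  let ?f = "\<lambda>x. of_bool (x = s) :: real"
  have "measure_pmf.expectation (noise_pmf V \<delta>) (\<lambda>\<sigma>. ?f (\<sigma> p)) =
      measure_pmf.expectation (map_pmf (\<lambda>\<sigma>. \<sigma> p) (noise_pmf V \<delta>)) ?f"
    by (rule integral_map_pmf[symmetric])
  also have "map_pmf (\<lambda>\<sigma>. \<sigma> p) (noise_pmf V \<delta>) =
      map_pmf (\<lambda>b. if b then 1 else -1) (bernoulli_pmf (1/2 + \<delta>/2))"
    unfolding noise_pmf_def using assms(1,2) by (simp add: Pi_pmf_component finite_pairs)
  also have "measure_pmf.expectation \<dots> ?f = 1/2 + \<delta>/2 * s"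
    using assms(3,4) by (auto simp: algebra_simps)
  finally show ?thesis .
qed

lemma noise_agreements_Hoeffding:
  fixes S :: "'a set set" and s :: "'a set \<Rightarrow> int"
  assumes "finite V" and "S \<subseteq> pairs V" and "\<forall>p\<in>S. s p = 1 \<or> s p = -1"
    and "\<bar>\<delta>\<bar> \<le> 1" and "0 \<le> \<epsilon>"
  defines "\<mu> \<equiv> (\<Sum>p\<in>S. 1/2 + \<delta>/2 * s p)"
  shows "measure_pmf.prob (noise_pmf V \<delta>) {\<sigma>. real (card {p\<in>S. \<sigma> p = s p}) \<le> \<mu> - \<epsilon>}
           \<le> exp (-2 * \<epsilon>\<^sup>2 / card S)"
    and "measure_pmf.prob (noise_pmf V \<delta>) {\<sigma>. real (card {p\<in>S. \<sigma> p = s p}) \<ge> \<mu> + \<epsilon>}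
           \<le> exp (-2 * \<epsilon>\<^sup>2 / card S)"
proof -
  define M where "M = measure_pmf (noise_pmf V \<delta>)"
  define X where "X = (\<lambda>p \<sigma>. of_bool (\<sigma> p = s p) :: real)"
  have fin_S: "finite S"
    using assms(1,2) finite_pairs finite_subset by blast
  have card_eq_sum: "real (card {p\<in>S. \<sigma> p = s p}) = (\<Sum>p\<in>S. X p \<sigma>)" for \<sigma>
  proof -
    have "{p\<in>S. \<sigma> p = s p} = S \<inter> {p. \<sigma> p = s p}"
      by blast
    then show ?thesis
      using fin_S by (simp add: X_def sum_of_bool_eq)
  qed
  interpret M: prob_space M
    unfolding M_def by (rule measure_pmf.prob_space_axioms)
  have "M.indep_vars (\<lambda>_. count_space UNIV) (\<lambda>p \<sigma>. \<sigma> p) (pairs V)"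
    unfolding M_def noise_pmf_def by (rule indep_vars_Pi_pmf[OF finite_pairs[OF assms(1)]])
  then have "M.indep_vars (\<lambda>_. count_space UNIV) (\<lambda>p \<sigma>. \<sigma> p) S"
    using assms(2) by (rule M.indep_vars_subset)
  then have indep: "M.indep_vars (\<lambda>_. borel) X S"
    unfolding X_def by (rule M.indep_vars_compose2[where Y = "\<lambda>p x. of_bool (x = s p)"]) simp
  have "M.expectation (X p) = 1/2 + \<delta>/2 * s p" if "p \<in> S" for p
    unfolding M_def X_def
    using expectation_noise_eq_sign[OF assms(1) subsetD[OF assms(2) that]] assms(3,4) that by simp
  then have \<mu>_eq: "\<mu> = (\<Sum>p\<in>S. M.expectation (X p))"
    unfolding \<mu>_def by (intro sum.cong) simp_all
  interpret Hoeffding_ineq M S X "\<lambda>_. 0" "\<lambda>_. 1" \<mu>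
  proof unfold_locales
    show "AE \<sigma> in M. X p \<sigma> \<in> {0..1}" for p
      by (simp add: X_def)
    show "\<mu> \<equiv> (\<Sum>p\<in>S. M.expectation (X p))"
      using \<mu>_eq by simp
  qed (fact fin_S indep)+
  show "measure_pmf.prob (noise_pmf V \<delta>) {\<sigma>. real (card {p\<in>S. \<sigma> p = s p}) \<le> \<mu> - \<epsilon>}
           \<le> exp (-2 * \<epsilon>\<^sup>2 / card S)"
  proof (cases "S = {}")
    case False
    then show ?thesis
      using Hoeffding_ineq_le[OF assms(5)] fin_S by (simp add: card_eq_sum M_def card_gt_0_iff)
  qed simp
  show "measure_pmf.prob (noise_pmf V \<delta>) {\<sigma>. real (card {p\<in>S. \<sigma> p = s p}) \<ge> \<mu> + \<epsilon>}
           \<le> exp (-2 * \<epsilon>\<^sup>2 / card S)"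
  proof (cases "S = {}")
    case False
    then show ?thesis
      using Hoeffding_ineq_ge[OF assms(5)] fin_S by (simp add: card_eq_sum M_def card_gt_0_iff)
  qed simp
qed

lemma sum_ge_if_biased:
  fixes t :: "'a \<Rightarrow> real"
  assumes "finite B" and "biased \<eta> C B"
    and "\<forall>u\<in>B. \<bar>t u\<bar> \<le> 1" and "\<forall>u\<in>B \<inter> C. t u = 1"
  shows "2 * \<eta> * card B \<le> (\<Sum>u\<in>B. t u)"
proof -
  have "card B = card (B \<inter> C) + card (B - C)"
    using assms(1) by (rule card_Int_Diff)
  moreover have "(\<Sum>u\<in>B - C. - 1) \<le> (\<Sum>u\<in>B - C. t u)"
    using assms(3) by (intro sum_mono) (auto simp: abs_le_iff)
  moreover have "(\<Sum>u\<in>B. t u) = (\<Sum>u\<in>B \<inter> C. t u) + (\<Sum>u\<in>B - C. t u)"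
    using assms(1) by (metis sum.Int_Diff)
  ultimately show ?thesis
    using assms(2,4) unfolding biased_def by (simp add: algebra_simps)
qed

lemma tau_if_mem_cluster:
  assumes "is_partition V k Cl" and "i \<in> {1..k}" and "u \<in> Cl i"
  shows "tau k Cl v u = (if v \<in> Cl i then 1 else -1)"
proof (cases "v \<in> Cl i")
  case False
  have "u \<notin> Cl j" if "j \<in> {1..k}" and "v \<in> Cl j" for j
  proof -
    have "Cl i \<inter> Cl j = {}"
      using assms(1,2) False that unfolding is_partition_def by metis
    then show ?thesis
      using assms(3) by blast
  qed
  then show ?thesis
    using False unfolding tau_def by auto
qed (use assms(2,3) in \<open>auto simp: tau_def\<close>)

lemma is_partition_card_ge:
  assumes "finite V" and "is_partition V k Cl"
  shows "k \<le> card V"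
proof -
  have clusters: "\<forall>i\<in>{1..k}. Cl i \<noteq> {} \<and> Cl i \<subseteq> V"
    and disjoint: "\<forall>i\<in>{1..k}. \<forall>j\<in>{1..k}. i \<noteq> j \<longrightarrow> Cl i \<inter> Cl j = {}"
    and cover: "(\<Union>i\<in>{1..k}. Cl i) = V"
    using assms(2) unfolding is_partition_def by blast+
  have finite: "\<forall>i\<in>{1..k}. finite (Cl i)"
    using clusters assms(1) finite_subset by blast
  have "k = (\<Sum>i\<in>{1..k}. 1)" by simp
  also have "\<dots> \<le> (\<Sum>i\<in>{1..k}. card (Cl i))"
    using clusters finite by (intro sum_mono) (simp add: Suc_le_eq card_gt_0_iff)
  also have "\<dots> = card V"
    using card_UN_disjoint[of "{1..k}" Cl] finite disjoint cover by simp
  finally show ?thesis .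
qed

lemma exp_le_inverse_power:
  fixes x n :: real
  assumes "0 < n" and "real a * ln n \<le> x"
  shows "exp (- x) \<le> 1 / n ^ a"
proof -
  have "exp (- x) \<le> exp (- (real a * ln n))"
    using assms(2) by simp
  also have "\<dots> = 1 / exp (ln n) ^ a"
    by (simp add: exp_minus inverse_eq_divide exp_of_nat_mult)
  also have "\<dots> = 1 / n ^ a"
    using assms(1) by simp
  finally show ?thesis .
qed

lemma divide_power_le_inverse_power:
  fixes c n :: nat
  assumes "c \<le> n ^ a" and "a + b \<le> d"
  shows "real c / real n ^ d \<le> 1 / real n ^ b"
proof (cases "n = 0")
  case False
  have "real c / real n ^ d \<le> real n ^ a / real n ^ d"
    using assms(1) by (intro divide_right_mono) (simp_all flip: of_nat_power)
  also have "\<dots> = 1 / real n ^ (d - a)"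
    using False assms(2) by (simp add: field_simps flip: power_add)
  also have "\<dots> \<le> 1 / real n ^ b"
    using False assms(2) by (intro divide_left_mono power_increasing) auto
  finally show ?thesis .
qed (use assms in \<open>auto simp: power_0_left\<close>)

lemma prob_Ball_ge_union_bound:
  fixes M :: "'a pmf" and e :: real
  assumes "finite I" and "\<forall>i\<in>I. measure_pmf.prob M {x. \<not> P i x} \<le> e"
  shows "measure_pmf.prob M {x. \<forall>i\<in>I. P i x} \<ge> 1 - card I * e"
proof -
  have "measure_pmf.prob M (\<Union>i\<in>I. {x. \<not> P i x}) \<le> (\<Sum>i\<in>I. measure_pmf.prob M {x. \<not> P i x})"
    using assms(1) by (rule measure_pmf.finite_measure_subadditive_finite) simp
  also have "\<dots> \<le> card I * e"
    using assms(2) by (simp add: sum_bounded_above)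
  finally have "measure_pmf.prob M (\<Union>i\<in>I. {x. \<not> P i x}) \<le> card I * e" .
  moreover have "{x. \<forall>i\<in>I. P i x} = UNIV - (\<Union>i\<in>I. {x. \<not> P i x})"
    by blast
  ultimately show ?thesis
    using measure_pmf.prob_compl[of "\<Union>i\<in>I. {x. \<not> P i x}" M] by simp
qed

definition pair_tau :: "nat \<Rightarrow> (nat \<Rightarrow> 'a set) \<Rightarrow> 'a set \<Rightarrow> int" where
  "pair_tau k Cl p = (if \<exists>j\<in>{1..k}. p \<subseteq> Cl j then 1 else -1)"

lemma inj_on_doubleton: "inj_on (\<lambda>u. {v, u}) B"
  by (auto simp: inj_on_def doubleton_eq_iff)

lemma tau_eq_pair_tau: "tau k Cl v u = pair_tau k Cl {v, u}"
  by (simp add: tau_def pair_tau_def)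

lemma dvB_eq_card_agreements:
  "dvB k Cl \<sigma> v B = card {p \<in> (\<lambda>u. {v, u}) ` B. \<sigma> p = pair_tau k Cl p}"
proof -
  have "\<sigma> {v, u} * tau k Cl v u = 1 \<longleftrightarrow> \<sigma> {v, u} = tau k Cl v u" for u
    by (auto simp: tau_def)
  then have "{p \<in> (\<lambda>u. {v, u}) ` B. \<sigma> p = pair_tau k Cl p}
      = (\<lambda>u. {v, u}) ` {u\<in>B. noisy_answer k Cl \<sigma> v u = 1}"
    by (auto simp: tau_eq_pair_tau noisy_answer_def)
  then show ?thesis
    by (simp add: dvB_def card_image inj_on_doubleton)
qed

lemma dvB_Hoeffding:
  fixes k :: nat and Cl :: "nat \<Rightarrow> 'a set"
  assumes "finite V" and "v \<in> V" and "B \<subseteq> V" and "\<bar>\<delta>\<bar> \<le> 1" and "0 \<le> \<epsilon>"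
  defines "\<mu> \<equiv> card B / 2 + \<delta>/2 * (\<Sum>u\<in>B. real_of_int (tau k Cl v u))"
  shows "measure_pmf.prob (noise_pmf V \<delta>) {\<sigma>. real (dvB k Cl \<sigma> v B) \<le> \<mu> - \<epsilon>}
           \<le> exp (-2 * \<epsilon>\<^sup>2 / card B)"
    and "measure_pmf.prob (noise_pmf V \<delta>) {\<sigma>. real (dvB k Cl \<sigma> v B) \<ge> \<mu> + \<epsilon>}
           \<le> exp (-2 * \<epsilon>\<^sup>2 / card B)"
proof -
  define S where "S = (\<lambda>u. {v, u}) ` B"
  have "S \<subseteq> pairs V"
    using assms(2,3) by (auto simp: S_def pairs_def)
  moreover have "\<forall>p\<in>S. pair_tau k Cl p = 1 \<or> pair_tau k Cl p = -1"
    by (simp add: pair_tau_def)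
  moreover have "(\<Sum>p\<in>S. 1/2 + \<delta>/2 * pair_tau k Cl p) = \<mu>"
    unfolding \<mu>_def S_def sum.reindex[OF inj_on_doubleton]
    by (simp add: tau_eq_pair_tau sum.distrib sum_distrib_left)
  moreover have "card S = card B"
    by (simp add: S_def card_image[OF inj_on_doubleton])
  ultimately show
    "measure_pmf.prob (noise_pmf V \<delta>) {\<sigma>. real (dvB k Cl \<sigma> v B) \<le> \<mu> - \<epsilon>}
       \<le> exp (-2 * \<epsilon>\<^sup>2 / card B)"
    "measure_pmf.prob (noise_pmf V \<delta>) {\<sigma>. real (dvB k Cl \<sigma> v B) \<ge> \<mu> + \<epsilon>}
       \<le> exp (-2 * \<epsilon>\<^sup>2 / card B)"
    using noise_agreements_Hoeffding[OF assms(1) _ _ assms(4,5), of S "pair_tau k Cl"]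
    by (simp_all add: dvB_eq_card_agreements S_def)
qed

lemma biased_sum_tau_margin:
  assumes "finite B" and "is_partition V k Cl" and "i \<in> {1..k}" and "biased \<eta> (Cl i) B"
  shows "2 * \<eta> * card B \<le> (if v \<in> Cl i then 1 else -1) * (\<Sum>u\<in>B. real_of_int (tau k Cl v u))"
proof -
  let ?sign = "if v \<in> Cl i then 1 else -1 :: real"
  have "\<forall>u\<in>B. \<bar>?sign * tau k Cl v u\<bar> \<le> 1"
    by (simp add: tau_def)
  moreover have "\<forall>u\<in>B \<inter> Cl i. ?sign * tau k Cl v u = 1"
    using tau_if_mem_cluster[OF assms(2,3)] by simp
  ultimately show ?thesis
    unfolding sum_distrib_left by (rule sum_ge_if_biased[OF assms(1,4)])
qed

lemma cluster_verify_error_prob: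
  assumes "finite V" and "is_partition V k Cl" and "i \<in> {1..k}" and "v \<in> V"
    and "B \<subseteq> V" and "biased \<eta> (Cl i) B" and "0 \<le> \<delta>" and "\<delta> \<le> 1" and "0 \<le> \<eta>"
  shows "measure_pmf.prob (noise_pmf V \<delta>) {\<sigma>. \<not> (cluster_verify k Cl \<sigma> v B \<longleftrightarrow> v \<in> Cl i)}
           \<le> exp (-2 * (\<delta> * \<eta>)\<^sup>2 * card B)"
proof -
  define m where "m = real (card B)"
  define \<Sigma> where "\<Sigma> = (\<Sum>u\<in>B. real_of_int (tau k Cl v u))"
  define \<epsilon> where "\<epsilon> = \<delta> * \<eta> * m"
  have "2 * \<eta> * m \<le> (if v \<in> Cl i then 1 else -1) * \<Sigma>"
    unfolding m_def \<Sigma>_def using assms(1,5) finite_subset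
    by (intro biased_sum_tau_margin[OF _ assms(2,3,6)]) blast
  then have margin: "\<epsilon> \<le> (if v \<in> Cl i then 1 else -1) * (\<delta>/2 * \<Sigma>)"
    using mult_left_mono[of _ _ "\<delta>/2"] assms(7) by (fastforce simp: \<epsilon>_def)
  have "\<bar>\<delta>\<bar> \<le> 1" and "0 \<le> \<epsilon>"
    using assms(7,8,9) by (simp_all add: \<epsilon>_def m_def)
  note Hoeffding = dvB_Hoeffding[OF assms(1,4,5) this, where k = k and Cl = Cl, folded m_def \<Sigma>_def]
  have "exp (-2 * \<epsilon>\<^sup>2 / m) = exp (-2 * (\<delta> * \<eta>)\<^sup>2 * card B)"
    by (simp add: \<epsilon>_def m_def power2_eq_square)
  moreover have "measure_pmf.prob (noise_pmf V \<delta>) {\<sigma>. \<not> (cluster_verify k Cl \<sigma> v B \<longleftrightarrow> v \<in> Cl i)}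
      \<le> exp (-2 * \<epsilon>\<^sup>2 / m)"
  proof (cases "v \<in> Cl i")
    case True
    with margin have "{\<sigma>. \<not> (cluster_verify k Cl \<sigma> v B \<longleftrightarrow> v \<in> Cl i)}
        \<subseteq> {\<sigma>. real (dvB k Cl \<sigma> v B) \<le> m/2 + \<delta>/2 * \<Sigma> - \<epsilon>}"
      by (auto simp: cluster_verify_def m_def)
    then show ?thesis
      by (rule order_trans[OF measure_pmf.finite_measure_mono Hoeffding(1)]) simp
  next
    case False
    with margin have "{\<sigma>. \<not> (cluster_verify k Cl \<sigma> v B \<longleftrightarrow> v \<in> Cl i)}
        \<subseteq> {\<sigma>. real (dvB k Cl \<sigma> v B) \<ge> m/2 + \<delta>/2 * \<Sigma> + \<epsilon>}"
      by (auto simp: cluster_verify_def m_def)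
    then show ?thesis
      by (rule order_trans[OF measure_pmf.finite_measure_mono Hoeffding(2)]) simp
  qed
  ultimately show ?thesis
    by simp
qed

lemma cluster_verify_error_prob_le_inverse_power:
  assumes "finite V" and "is_partition V k Cl" and "i \<in> {1..k}" and "v \<in> V"
    and "B \<subseteq> V" and "biased \<eta> (Cl i) B" and "0 < \<delta>" and "\<delta> \<le> 1" and "0 < \<eta>"
    and "16 * ln (card V) / (\<eta>\<^sup>2 * \<delta>\<^sup>2) \<le> card B"
  shows "measure_pmf.prob (noise_pmf V \<delta>) {\<sigma>. \<not> (cluster_verify k Cl \<sigma> v B \<longleftrightarrow> v \<in> Cl i)}
           \<le> 1 / real (card V) ^ 32"
proof -
  have "measure_pmf.prob (noise_pmf V \<delta>) {\<sigma>. \<not> (cluster_verify k Cl \<sigma> v B \<longleftrightarrow> v \<in> Cl i)}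
      \<le> exp (- (2 * (\<delta> * \<eta>)\<^sup>2 * card B))"
    using cluster_verify_error_prob[OF assms(1-6)] assms(7-9) by simp
  also have "\<dots> \<le> 1 / real (card V) ^ 32"
  proof (rule exp_le_inverse_power)
    show "0 < real (card V)"
      using assms(1,4) card_gt_0_iff by auto
    show "real 32 * ln (card V) \<le> 2 * (\<delta> * \<eta>)\<^sup>2 * card B"
      using assms(7,9,10) by (auto simp: pos_divide_le_eq power_mult_distrib mult.commute)
  qed
  finally show ?thesis .
qed

theorem lemma3p4:
  fixes V :: "'a set" and k :: nat and Cl :: "nat \<Rightarrow> 'a set"
    and \<delta> \<eta> :: real and B :: "nat \<Rightarrow> 'a set"
  assumes "finite V" and "is_partition V k Cl"
    and "0 < \<delta>" and "\<delta> < 1" and "0 < \<eta>" and "\<eta> \<le> 1/2"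
    and "\<forall>i\<in>{1..k}. B i \<subseteq> V \<and> biased \<eta> (Cl i) (B i) \<and>
           real (card (B i)) \<ge> 16 * ln (real (card V)) / (\<eta>^2 * \<delta>^2)"
  shows "measure_pmf.prob (noise_pmf V \<delta>)
           {\<sigma>. \<forall>v\<in>V. \<forall>i\<in>{1..k}.
              (v \<in> Cl i \<longrightarrow> cluster_verify k Cl \<sigma> v (B i)) \<and>
              (v \<notin> Cl i \<longrightarrow> \<not> cluster_verify k Cl \<sigma> v (B i))}
         \<ge> 1 - 1 / real (card V) ^ 6"
proof -
  define correct where
    "correct p \<sigma> \<longleftrightarrow> (cluster_verify k Cl \<sigma> (fst p) (B (snd p)) \<longleftrightarrow> fst p \<in> Cl (snd p))" for p \<sigma>
  have event: "{\<sigma>. \<forall>v\<in>V. \<forall>i\<in>{1..k}.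
      (v \<in> Cl i \<longrightarrow> cluster_verify k Cl \<sigma> v (B i)) \<and> (v \<notin> Cl i \<longrightarrow> \<not> cluster_verify k Cl \<sigma> v (B i))}
      = {\<sigma>. \<forall>p\<in>V \<times> {1..k}. correct p \<sigma>}"
    by (auto simp: correct_def)
  have "\<forall>p\<in>V \<times> {1..k}. measure_pmf.prob (noise_pmf V \<delta>) {\<sigma>. \<not> correct p \<sigma>} \<le> 1 / real (card V) ^ 32"
    using cluster_verify_error_prob_le_inverse_power[OF assms(1,2)] assms(3-5,7)
    by (auto simp: correct_def)
  then have "1 - card (V \<times> {1..k}) * (1 / real (card V) ^ 32)
      \<le> measure_pmf.prob (noise_pmf V \<delta>) {\<sigma>. \<forall>p\<in>V \<times> {1..k}. correct p \<sigma>}"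
    using assms(1) by (intro prob_Ball_ge_union_bound) auto
  moreover have "real (card (V \<times> {1..k})) / real (card V) ^ 32 \<le> 1 / real (card V) ^ 6"
    using is_partition_card_ge[OF assms(1,2)]
    by (intro divide_power_le_inverse_power[where a = 2]) (simp_all add: card_cartesian_product power2_eq_square)
  ultimately show ?thesis
    unfolding event by simp
qed

end
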